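(* If $r$ divides $s$, then each of $\nu(n,P^{(r)}_s)$, $\nu^*(n,P^{(r)}_s)$ and $\tau^*(n,P^{(r)}_s)$ equals $\left(\left(\frac{r}{s}\right)^r+o(1)\right)\binom{n}{r}$, where $o(1)\to0$ as $n\to\infty$ with $r,s$ fixed.
   Context: $K^{(r)}_n$ is the ordered complete $r$-uniform hypergraph on $[n]=\{1,\dots,n\}$ with its natural order; a copy of an ordered hypergraph $H$ in $K^{(r)}_n$ is the image of $H$ under an order-preserving injection $V(H)\to[n]$. The natural path $P^{(r)}_s$ has vertices $v_1<\dots<v_s$ and edges all sets of $r$ consecutive vertices $\{v_j,\dots,v_{j+r-1}\}$, $1\le j\le s-r+1$. $\nu(n,H)$ is the maximum number of pairwise edge-disjoint copies of $H$ in $K^{(r)}_n$. A fractional $H$-transversal is a function $w:E(K^{(r)}_n)\to[0,\infty)$ with $\sum_{e\in E(H')}w(e)\ge1$ for every copy $H'$ of $H$; $\tau^*(n,H)$ is the minimum total weight of a fractional $H$-transversal. A fractional $H$-packing is an assignment of weights $w(H')\ge0$ to the copies $H'$ of $H$ in $K^{(r)}_n$ such that for each edge $e$ of $K^{(r)}_n$ the total weight of copies containing $e$ is at most $1$; $\nu^*(n,H)$ is the maximum total weight of a fractional $H$-packing. *)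

theory Defs
  imports Complex_Main
begin

definition Kedges :: "nat \<Rightarrow> nat \<Rightarrow> nat set set" where
  "Kedges n r = {e. e \<subseteq> {1..n} \<and> card e = r}"

text \<open>The path has vertices v_0 < ... < v_(s-1) (indexed from 0 here) and edges
  {v_j,...,v_(j+r-1)} for j + r \<le> s; a copy is the image under an
  order-preserving injection f into {1..n}.\<close>
definition path_copies :: "nat \<Rightarrow> nat \<Rightarrow> nat \<Rightarrow> nat set set set" where
  "path_copies n r s =
     {{f ` {j..<j+r} | j. j + r \<le> s} | f.
        strict_mono_on {0..<s} f \<and> f ` {0..<s} \<subseteq> {1..n}}"

definition nu_path :: "nat \<Rightarrow> nat \<Rightarrow> nat \<Rightarrow> nat" where
  "nu_path n r s = Max {card C | C. C \<subseteq> path_copies n r s \<and>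
      (\<forall>A\<in>C. \<forall>B\<in>C. A \<noteq> B \<longrightarrow> A \<inter> B = {})}"

definition nu_star_path :: "nat \<Rightarrow> nat \<Rightarrow> nat \<Rightarrow> real" where
  "nu_star_path n r s = Sup {(\<Sum>P\<in>path_copies n r s. w P) | w.
      (\<forall>P\<in>path_copies n r s. 0 \<le> w P) \<and>
      (\<forall>e\<in>Kedges n r. (\<Sum>P\<in>{P\<in>path_copies n r s. e \<in> P}. w P) \<le> 1)}"

definition tau_star_path :: "nat \<Rightarrow> nat \<Rightarrow> nat \<Rightarrow> real" where
  "tau_star_path n r s = Inf {(\<Sum>e\<in>Kedges n r. w e) | w.
      (\<forall>e\<in>Kedges n r. 0 \<le> w e) \<and>
      (\<forall>P\<in>path_copies n r s. (\<Sum>e\<in>P. w e) \<ge> 1)}"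

end

theory Submission
  imports Defs
begin

text \<open>Write \<open>s = k r\<close> and \<open>m = n div k\<close>. For every \<open>r\<close>-subset \<open>X\<close> of \<open>[m]\<close>, the path that runs
  through \<open>X\<close>, then \<open>X + m\<close>, \<open>X + 2m\<close>, ..., \<open>X + (k - 1) m\<close> is a copy of \<open>P_s\<close> each of whose
  edges reduces modulo \<open>m\<close> to \<open>X\<close>; these copies are pairwise edge-disjoint, so
  \<open>\<nu> \<ge> C(m, r)\<close>. Conversely, cut \<open>[n]\<close> into \<open>k\<close> intervals of length \<open>m + 1\<close> and give weight
  \<open>1/k\<close> to every edge inside one interval. Of the windows of \<open>r\<close> consecutive vertices of
  a copy of \<open>P_s\<close>, at most \<open>(k - 1)(r - 1)\<close> meet two intervals, so at least \<open>k\<close> edges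
  of the copy lie inside an interval: this is a fractional transversal of weight at most
  \<open>C(m + 1, r)\<close>. Weak LP duality gives \<open>\<nu> \<le> \<nu>* \<le> \<tau>*\<close>, and
  \<open>C(n div k + c, r) / C(n, r) \<longrightarrow> k^-r\<close>.\<close>

definition path_edges :: "nat \<Rightarrow> nat \<Rightarrow> (nat \<Rightarrow> nat) \<Rightarrow> nat set set" where
  "path_edges r s f = {f ` {j..<j+r} | j. j + r \<le> s}"

lemma path_edgesI: "j + r \<le> s \<Longrightarrow> f ` {j..<j+r} \<in> path_edges r s f"
  unfolding path_edges_def by (intro CollectI exI[of _ j]) simp

lemma path_copies_eq:
  "path_copies n r s =
     {path_edges r s f | f. strict_mono_on {0..<s} f \<and> f ` {0..<s} \<subseteq> {1..n}}"
  by (simp add: path_copies_def path_edges_def)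

lemma path_edges_subset_Kedges:
  assumes "strict_mono_on {0..<s} f" "f ` {0..<s} \<subseteq> {1..n}"
  shows "path_edges r s f \<subseteq> Kedges n r"
proof
  fix e assume "e \<in> path_edges r s f"
  then obtain j where j: "j + r \<le> s" "e = f ` {j..<j+r}"
    by (auto simp: path_edges_def)
  then have window: "{j..<j+r} \<subseteq> {0..<s}"
    by auto
  then have "inj_on f {j..<j+r}"
    using strict_mono_on_imp_inj_on[OF assms(1)] inj_on_subset by blast
  with j window assms(2) show "e \<in> Kedges n r"
    by (auto simp: Kedges_def card_image)
qed

lemma path_copy_subset_Kedges: "P \<in> path_copies n r s \<Longrightarrow> P \<subseteq> Kedges n r"
  unfolding path_copies_eq using path_edges_subset_Kedges by blast

lemma finite_Kedges: "finite (Kedges n r)"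
  unfolding Kedges_def by (rule finite_subset[of _ "Pow {1..n}"]) auto

lemma finite_path_copies: "finite (path_copies n r s)"
  by (rule finite_subset[of _ "Pow (Kedges n r)"])
    (auto dest: path_copy_subset_Kedges simp: finite_Kedges)

lemma finite_path_copy: "P \<in> path_copies n r s \<Longrightarrow> finite P"
  using finite_subset[OF path_copy_subset_Kedges finite_Kedges] .

lemma path_copy_nonempty:
  assumes "P \<in> path_copies n r s" "r \<le> s"
  shows "P \<noteq> {}"
proof -
  obtain f where "P = path_edges r s f"
    using assms(1) by (auto simp: path_copies_eq)
  moreover have "f ` {0..<0+r} \<in> path_edges r s f"
    using assms(2) by (intro path_edgesI) simp
  ultimately show ?thesis
    by blast
qed

lemma inj_on_path_windows:
  fixes f :: "nat \<Rightarrow> 'a::order"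
  assumes f: "strict_mono_on {0..<s} f" and "0 < r"
  shows "inj_on (\<lambda>j. f ` {j..<j+r}) {j. j + r \<le> s}"
proof -
  have first_not_later: "f j \<notin> f ` {j'..<j'+r}" if "j < j'" "j' + r \<le> s" for j j'
  proof
    assume "f j \<in> f ` {j'..<j'+r}"
    then obtain i where i: "i \<in> {j'..<j'+r}" "f j = f i"
      by blast
    with that have "j < i" "i < s"
      by auto
    then have "f j < f i"
      by (intro strict_mono_onD[OF f]) auto
    with i(2) show False
      by simp
  qed
  show ?thesis
  proof (rule inj_onI)
    fix j j' assume "j \<in> {j. j + r \<le> s}" "j' \<in> {j. j + r \<le> s}"
      and eq: "f ` {j..<j+r} = f ` {j'..<j'+r}"
    moreover have "f j \<in> f ` {j..<j+r}" "f j' \<in> f ` {j'..<j'+r}"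
      using \<open>0 < r\<close> by auto
    ultimately show "j = j'"
      using first_not_later by (cases j j' rule: linorder_cases) auto
  qed
qed

section \<open>Packings and fractional transversals\<close>

definition fractional_packing :: "nat \<Rightarrow> nat \<Rightarrow> nat \<Rightarrow> (nat set set \<Rightarrow> real) \<Rightarrow> bool" where
  "fractional_packing n r s w \<longleftrightarrow>
     (\<forall>P\<in>path_copies n r s. 0 \<le> w P) \<and>
     (\<forall>e\<in>Kedges n r. (\<Sum>P\<in>{P\<in>path_copies n r s. e \<in> P}. w P) \<le> 1)"

definition fractional_transversal :: "nat \<Rightarrow> nat \<Rightarrow> nat \<Rightarrow> (nat set \<Rightarrow> real) \<Rightarrow> bool" where
  "fractional_transversal n r s t \<longleftrightarrow>
     (\<forall>e\<in>Kedges n r. 0 \<le> t e) \<and> (\<forall>P\<in>path_copies n r s. 1 \<le> (\<Sum>e\<in>P. t e))"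

lemma nu_star_path_eq_Sup:
  "nu_star_path n r s = Sup {(\<Sum>P\<in>path_copies n r s. w P) | w. fractional_packing n r s w}"
  by (simp add: nu_star_path_def fractional_packing_def)

lemma tau_star_path_eq_Inf:
  "tau_star_path n r s = Inf {(\<Sum>e\<in>Kedges n r. t e) | t. fractional_transversal n r s t}"
  by (simp add: tau_star_path_def fractional_transversal_def)

lemma fractional_packing_zero: "fractional_packing n r s (\<lambda>_. 0)"
  by (simp add: fractional_packing_def)

lemma fractional_transversal_one:
  assumes "r \<le> s"
  shows "fractional_transversal n r s (\<lambda>_. 1)"
  using assms path_copy_nonempty finite_path_copy
  by (fastforce simp: fractional_transversal_def Suc_le_eq)

lemma fractional_weak_duality:
  assumes w: "fractional_packing n r s w" and t: "fractional_transversal n r s t"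
  shows "(\<Sum>P\<in>path_copies n r s. w P) \<le> (\<Sum>e\<in>Kedges n r. t e)"
proof -
  let ?Q = "path_copies n r s" and ?K = "Kedges n r"
  have "(\<Sum>P\<in>?Q. w P) \<le> (\<Sum>P\<in>?Q. w P * (\<Sum>e\<in>P. t e))"
  proof (intro sum_mono)
    fix P assume "P \<in> ?Q"
    then have "0 \<le> w P" "1 \<le> (\<Sum>e\<in>P. t e)"
      using w t by (auto simp: fractional_packing_def fractional_transversal_def)
    then show "w P \<le> w P * (\<Sum>e\<in>P. t e)"
      by (metis mult_left_mono mult.right_neutral)
  qed
  also have "\<dots> = (\<Sum>P\<in>?Q. \<Sum>e\<in>{e\<in>?K. e \<in> P}. w P * t e)"
  proof (intro sum.cong refl)
    fix P assume "P \<in> ?Q"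
    then have "{e\<in>?K. e \<in> P} = P"
      using path_copy_subset_Kedges by blast
    then show "w P * (\<Sum>e\<in>P. t e) = (\<Sum>e\<in>{e\<in>?K. e \<in> P}. w P * t e)"
      by (simp add: sum_distrib_left)
  qed
  also have "\<dots> = (\<Sum>e\<in>?K. t e * (\<Sum>P\<in>{P\<in>?Q. e \<in> P}. w P))"
    by (simp add: sum.swap_restrict[OF finite_path_copies finite_Kedges] sum_distrib_left
        mult.commute)
  also have "\<dots> \<le> (\<Sum>e\<in>?K. t e)"
    using w t by (intro sum_mono)
      (simp add: fractional_packing_def fractional_transversal_def mult_left_le)
  finally show ?thesis .
qed

lemma sum_le_nu_star_path:
  assumes "r \<le> s" "fractional_packing n r s w"
  shows "(\<Sum>P\<in>path_copies n r s. w P) \<le> nu_star_path n r s"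
  unfolding nu_star_path_eq_Sup
proof (rule cSup_upper)
  show "bdd_above {(\<Sum>P\<in>path_copies n r s. w P) | w. fractional_packing n r s w}"
    using fractional_weak_duality[OF _ fractional_transversal_one[OF \<open>r \<le> s\<close>]]
    by (intro bdd_aboveI[where M = "real (card (Kedges n r))"]) auto
qed (use assms in blast)

lemma tau_star_path_le_sum:
  assumes "fractional_transversal n r s t"
  shows "tau_star_path n r s \<le> (\<Sum>e\<in>Kedges n r. t e)"
  unfolding tau_star_path_eq_Inf
proof (rule cInf_lower)
  show "bdd_below {(\<Sum>e\<in>Kedges n r. t e) | t. fractional_transversal n r s t}"
    by (rule bdd_belowI[of _ 0]) (auto simp: fractional_transversal_def intro: sum_nonneg)
qed (use assms in blast)

lemma nu_star_le_tau_star_path: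
  assumes "r \<le> s"
  shows "nu_star_path n r s \<le> tau_star_path n r s"
  unfolding nu_star_path_eq_Sup tau_star_path_eq_Inf
  using fractional_packing_zero fractional_transversal_one[OF assms] fractional_weak_duality
  by (intro cSup_least cInf_greatest) blast+

lemma nu_path_eq_Max:
  "nu_path n r s = Max {card C | C. C \<subseteq> path_copies n r s \<and> pairwise disjnt C}"
  by (simp add: nu_path_def pairwise_def disjnt_def)

lemma finite_packing_sizes:
  "finite {card C | C. C \<subseteq> path_copies n r s \<and> pairwise disjnt C}"
  by (rule finite_subset[of _ "card ` Pow (path_copies n r s)"]) (auto simp: finite_path_copies)

lemma card_le_nu_path:
  assumes "C \<subseteq> path_copies n r s" "pairwise disjnt C"
  shows "card C \<le> nu_path n r s"
  unfolding nu_path_eq_Max using assms by (intro Max_ge finite_packing_sizes) blast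

lemma nu_path_attained:
  obtains C where "C \<subseteq> path_copies n r s" "pairwise disjnt C" "card C = nu_path n r s"
proof -
  define S where "S = {card C | C. C \<subseteq> path_copies n r s \<and> pairwise disjnt C}"
  have "card {} \<in> S"
    unfolding S_def by (intro CollectI exI[of _ "{}"]) simp
  then have "Max S \<in> S"
    using finite_packing_sizes by (intro Max_in) (auto simp: S_def)
  then show ?thesis
    using that unfolding S_def nu_path_eq_Max by auto
qed

lemma nu_path_le_nu_star_path:
  assumes "r \<le> s"
  shows "real (nu_path n r s) \<le> nu_star_path n r s"
proof -
  obtain C where C: "C \<subseteq> path_copies n r s" "pairwise disjnt C" "card C = nu_path n r s"
    using nu_path_attained .
  have at_most_one: "card ({P\<in>path_copies n r s. e \<in> P} \<inter> C) \<le> 1" for e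
    unfolding One_nat_def using C(2) finite_path_copies
    by (subst card_le_Suc0_iff_eq) (auto simp: pairwise_def disjnt_def)
  have "fractional_packing n r s (\<lambda>P. of_bool (P \<in> C))"
    using at_most_one finite_path_copies by (simp add: fractional_packing_def Collect_conj_eq)
  then have "(\<Sum>P\<in>path_copies n r s. of_bool (P \<in> C)) \<le> nu_star_path n r s"
    by (rule sum_le_nu_star_path[OF assms])
  moreover have "path_copies n r s \<inter> C = C"
    using C(1) by blast
  ultimately show ?thesis
    using C(3) finite_path_copies by simp
qed

section \<open>Edge-disjoint copies from periodic embeddings\<close>

lemma image_mod_interval:
  fixes r j :: nat
  assumes "0 < r"
  shows "(\<lambda>i. i mod r) ` {j..<j+r} = {0..<r}"
proof
  show "(\<lambda>i. i mod r) ` {j..<j+r} \<subseteq> {0..<r}"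
    using assms by auto
  show "{0..<r} \<subseteq> (\<lambda>i. i mod r) ` {j..<j+r}"
  proof
    fix t assume t: "t \<in> {0..<r}"
    define d where "d = (t + r - j mod r) mod r"
    have "(j + d) mod r = (j + (t + r - j mod r)) mod r"
      by (simp add: d_def mod_add_right_eq)
    also have "j + (t + r - j mod r) = j div r * r + (t + r)"
      using mod_less_divisor[OF assms, of j] div_mult_mod_eq[of j r] by linarith
    also have "(j div r * r + (t + r)) mod r = t"
      using t by simp
    finally have "(j + d) mod r = t" .
    moreover have "j + d \<in> {j..<j+r}"
      using assms by (simp add: d_def)
    ultimately show "t \<in> (\<lambda>i. i mod r) ` {j..<j+r}"
      by (metis image_eqI)
  qed
qed

text \<open>The path runs through the elements of \<open>X\<close> in increasing order, then through their
  translates by \<open>m\<close>, by \<open>2 * m\<close>, and so on; every edge, a window of \<open>card X\<close> consecutive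
  vertices, therefore reduces modulo \<open>m\<close> to \<open>X\<close>.\<close>
definition periodic_embedding :: "nat \<Rightarrow> nat set \<Rightarrow> nat \<Rightarrow> nat" where
  "periodic_embedding m X i = sorted_list_of_set X ! (i mod card X) + i div card X * m"

lemma sorted_list_of_set_nth_mem:
  assumes "finite X" "i < card X"
  shows "sorted_list_of_set X ! i \<in> X"
  using assms by (metis length_sorted_list_of_set nth_mem set_sorted_list_of_set)

lemma sorted_list_of_set_nth_mod_mem:
  assumes "finite X" "X \<noteq> {}"
  shows "sorted_list_of_set X ! (i mod card X) \<in> X"
  using assms by (intro sorted_list_of_set_nth_mem) (simp_all add: card_gt_0_iff)

lemma strict_mono_periodic_embedding:
  assumes X: "X \<subseteq> {1..m}" "X \<noteq> {}"
  shows "strict_mono (periodic_embedding m X)"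
  unfolding strict_mono_Suc_iff
proof
  fix i
  let ?xs = "sorted_list_of_set X" and ?r = "card X"
  have "finite X"
    using X(1) finite_subset by blast
  then have "0 < ?r"
    using X(2) by (simp add: card_gt_0_iff)
  have mem: "?xs ! a \<in> {1..m}" if "a < ?r" for a
    using sorted_list_of_set_nth_mem[OF \<open>finite X\<close> that] X(1) by blast
  show "periodic_embedding m X i < periodic_embedding m X (Suc i)"
  proof (cases "Suc (i mod ?r) = ?r")
    case True
    then have "Suc i mod ?r = 0" "Suc i div ?r = Suc (i div ?r)"
      by (simp_all add: mod_Suc div_Suc)
    moreover have "?xs ! (i mod ?r) \<le> m" "1 \<le> ?xs ! 0"
      using mem[of "i mod ?r"] mem[of 0] \<open>0 < ?r\<close> by auto
    ultimately show ?thesis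
      by (simp add: periodic_embedding_def)
  next
    case False
    then have "Suc i mod ?r = Suc (i mod ?r)" "Suc i div ?r = i div ?r"
      by (simp_all add: mod_Suc div_Suc)
    moreover have "?xs ! (i mod ?r) < ?xs ! Suc (i mod ?r)"
      using False mod_less_divisor[OF \<open>0 < ?r\<close>, of i]
      by (intro sorted_wrt_nth_less[OF strict_sorted_list_of_set]) auto
    ultimately show ?thesis
      by (simp add: periodic_embedding_def)
  qed
qed

lemma periodic_embedding_range:
  assumes X: "X \<subseteq> {1..m}" "X \<noteq> {}" and "i < k * card X"
  shows "periodic_embedding m X i \<in> {1..k * m}"
proof -
  have "finite X"
    using X(1) finite_subset by blast
  then have "0 < card X"
    using X(2) by (simp add: card_gt_0_iff)
  have "sorted_list_of_set X ! (i mod card X) \<in> {1..m}"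
    using sorted_list_of_set_nth_mod_mem[OF \<open>finite X\<close> X(2)] X(1) by blast
  moreover have "(i div card X + 1) * m \<le> k * m"
    using assms(3) \<open>0 < card X\<close> by (intro mult_le_mono1) (simp add: div_less_iff_less_mult Suc_le_eq)
  ultimately show ?thesis
    by (auto simp: periodic_embedding_def)
qed

lemma periodic_embedding_window_residues:
  assumes X: "X \<subseteq> {1..m}" "X \<noteq> {}"
  shows "(\<lambda>y. (y - 1) mod m + 1) ` periodic_embedding m X ` {j..<j + card X} = X"
proof -
  let ?xs = "sorted_list_of_set X" and ?r = "card X"
  have "finite X"
    using X(1) finite_subset by blast
  then have "0 < ?r"
    using X(2) by (simp add: card_gt_0_iff)
  have "(periodic_embedding m X i - 1) mod m + 1 = ?xs ! (i mod ?r)" for i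
  proof -
    have "?xs ! (i mod ?r) \<in> {1..m}"
      using sorted_list_of_set_nth_mod_mem[OF \<open>finite X\<close> X(2)] X(1) by blast
    then have "1 \<le> ?xs ! (i mod ?r)" "?xs ! (i mod ?r) - 1 < m"
      by auto
    have pe: "periodic_embedding m X i - 1 = (?xs ! (i mod ?r) - 1) + i div ?r * m"
      using \<open>1 \<le> ?xs ! (i mod ?r)\<close> by (simp add: periodic_embedding_def)
    have residue: "((?xs ! (i mod ?r) - 1) + i div ?r * m) mod m = ?xs ! (i mod ?r) - 1"
      using \<open>?xs ! (i mod ?r) - 1 < m\<close> by simp
    have "(periodic_embedding m X i - 1) mod m = ?xs ! (i mod ?r) - 1"
      unfolding pe by (fact residue)
    with \<open>1 \<le> ?xs ! (i mod ?r)\<close> show ?thesis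
      by simp
  qed
  then have "(\<lambda>y. (y - 1) mod m + 1) ` periodic_embedding m X ` {j..<j + ?r}
      = nth ?xs ` (\<lambda>i. i mod ?r) ` {j..<j + ?r}"
    by (simp add: image_image)
  also have "\<dots> = X"
    using \<open>finite X\<close> by (simp add: image_mod_interval[OF \<open>0 < ?r\<close>] nth_image)
  finally show ?thesis .
qed

lemma periodic_copy_in_path_copies:
  assumes X: "X \<subseteq> {1..m}" "card X = r" and "0 < r" "k * m \<le> n"
  shows "path_edges r (k * r) (periodic_embedding m X) \<in> path_copies n r (k * r)"
proof -
  have "X \<noteq> {}"
    using X(2) \<open>0 < r\<close> by auto
  have "strict_mono_on {0..<k * r} (periodic_embedding m X)"
    using strict_mono_periodic_embedding[OF X(1) \<open>X \<noteq> {}\<close>]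
    by (simp add: strict_mono_def strict_mono_on_def)
  moreover have "periodic_embedding m X ` {0..<k * r} \<subseteq> {1..n}"
  proof (rule image_subsetI)
    fix i assume "i \<in> {0..<k * r}"
    then have "periodic_embedding m X i \<in> {1..k * m}"
      using periodic_embedding_range[OF X(1) \<open>X \<noteq> {}\<close>] X(2) by simp
    with \<open>k * m \<le> n\<close> show "periodic_embedding m X i \<in> {1..n}"
      by auto
  qed
  ultimately show ?thesis
    unfolding path_copies_eq by blast
qed

lemma periodic_copy_edge_residues:
  assumes "X \<subseteq> {1..m}" "X \<noteq> {}" "E \<in> path_edges (card X) s (periodic_embedding m X)"
  shows "(\<lambda>y. (y - 1) mod m + 1) ` E = X"
proof -
  obtain j where "E = periodic_embedding m X ` {j..<j + card X}"
    using assms(3) by (auto simp: path_edges_def)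
  then show ?thesis
    using periodic_embedding_window_residues[OF assms(1,2)] by simp
qed

lemma binomial_le_nu_path:
  assumes "0 < r" "0 < k" "k * m \<le> n"
  shows "m choose r \<le> nu_path n r (k * r)"
proof -
  let ?Xs = "{X. X \<subseteq> {1..m} \<and> card X = r}"
  let ?copy = "\<lambda>X. path_edges r (k * r) (periodic_embedding m X)"
  let ?residues = "\<lambda>E. (\<lambda>y. (y - 1) mod m + 1) ` E"
  have copy_determines: "X = ?residues E" if "X \<in> ?Xs" "E \<in> ?copy X" for X E
    using that assms(1) by (intro periodic_copy_edge_residues[symmetric]) auto
  have "inj_on ?copy ?Xs"
  proof (rule inj_onI)
    fix X Y assume "X \<in> ?Xs" "Y \<in> ?Xs" and same_copy: "?copy X = ?copy Y"
    let ?E = "periodic_embedding m X ` {0..<0 + r}"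
    have "?E \<in> ?copy X"
      using assms(2) by (intro path_edgesI) simp
    have "X = ?residues ?E"
      by (rule copy_determines[OF \<open>X \<in> ?Xs\<close> \<open>?E \<in> ?copy X\<close>])
    moreover have "Y = ?residues ?E"
      using \<open>?E \<in> ?copy X\<close> same_copy by (intro copy_determines[OF \<open>Y \<in> ?Xs\<close>]) simp
    ultimately show "X = Y"
      by simp
  qed
  then have "card (?copy ` ?Xs) = m choose r"
    by (simp add: card_image n_subsets)
  moreover have "pairwise disjnt (?copy ` ?Xs)"
  proof (rule pairwiseI)
    fix A B assume "A \<in> ?copy ` ?Xs" "B \<in> ?copy ` ?Xs" "A \<noteq> B"
    then obtain X Y where A: "A = ?copy X" "X \<in> ?Xs" and B: "B = ?copy Y" "Y \<in> ?Xs"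
      by (elim imageE)
    show "disjnt A B"
      unfolding disjnt_def
    proof (rule equals0I)
      fix E assume "E \<in> A \<inter> B"
      then have "E \<in> ?copy X" "E \<in> ?copy Y"
        using A(1) B(1) by auto
      then have "X = ?residues E" "Y = ?residues E"
        using copy_determines[OF A(2)] copy_determines[OF B(2)] by blast+
      with A(1) B(1) \<open>A \<noteq> B\<close> show False
        by simp
    qed
  qed
  moreover have "?copy ` ?Xs \<subseteq> path_copies n r (k * r)"
    using periodic_copy_in_path_copies assms by blast
  ultimately show ?thesis
    using card_le_nu_path[of "?copy ` ?Xs" n r "k * r"] by simp
qed

section \<open>A fractional transversal from a partition into intervals\<close>

text \<open>A level set of a monotone \<open>g\<close> is an interval, and every window of length \<open>r\<close> inside
  it is constant.\<close>
lemma card_level_set_le_constant_windows: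
  fixes g :: "nat \<Rightarrow> nat"
  assumes mono: "\<And>i j. i \<le> j \<Longrightarrow> j < L \<Longrightarrow> g i \<le> g j" and "0 < r"
  shows "card {i. i < L \<and> g i = b}
           \<le> card {j. j + r \<le> L \<and> g j = b \<and> g (j + r - 1) = b} + (r - 1)"
proof (cases "{i. i < L \<and> g i = b} = {}")
  case True
  then show ?thesis
    by (simp only: True) simp
next
  case False
  let ?I = "{i. i < L \<and> g i = b}"
  let ?W = "{j. j + r \<le> L \<and> g j = b \<and> g (j + r - 1) = b}"
  define lo hi where "lo = Min ?I" and "hi = Max ?I"
  have "finite ?I"
    by simp
  have lo: "lo \<in> ?I"
    unfolding lo_def by (rule Min_in[OF \<open>finite ?I\<close> False])
  have hi: "hi \<in> ?I"
    unfolding hi_def by (rule Max_in[OF \<open>finite ?I\<close> False])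
  have "?I \<subseteq> {lo..hi}"
    by (auto simp: lo_def hi_def)
  then have card_I: "card ?I \<le> Suc hi - lo"
    using card_mono[of "{lo..hi}" ?I] by simp
  have "{lo..<Suc (Suc hi) - r} \<subseteq> ?W"
  proof
    fix j assume "j \<in> {lo..<Suc (Suc hi) - r}"
    then have j: "lo \<le> j" "j + r - 1 \<le> hi"
      by auto
    moreover have "hi < L"
      using hi by simp
    ultimately have "g lo \<le> g j" "g j \<le> g (j + r - 1)" "g (j + r - 1) \<le> g hi"
      using \<open>0 < r\<close> by (auto intro!: mono)
    with j lo hi \<open>hi < L\<close> \<open>0 < r\<close> show "j \<in> ?W"
      by auto
  qed
  moreover have "finite ?W"
    by (rule finite_subset[of _ "{..L}"]) auto
  ultimately have "card {lo..<Suc (Suc hi) - r} \<le> card ?W"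
    by (rule card_mono[rotated])
  with card_I show ?thesis
    by simp
qed

lemma constant_windows_lower_bound:
  fixes g :: "nat \<Rightarrow> nat"
  assumes mono: "\<And>i j. i \<le> j \<Longrightarrow> j < L \<Longrightarrow> g i \<le> g j"
    and bounded: "\<And>i. i < L \<Longrightarrow> g i < K" and "0 < r"
  shows "L \<le> card {j. j + r \<le> L \<and> g j = g (j + r - 1)} + K * (r - 1)"
proof -
  let ?level = "\<lambda>b. {i. i < L \<and> g i = b}"
  let ?window = "\<lambda>b. {j. j + r \<le> L \<and> g j = b \<and> g (j + r - 1) = b}"
  have finite_window: "finite (?window b)" for b
    by (rule finite_subset[of _ "{..L}"]) auto
  have "(\<Union>b<K. ?level b) = {..<L}"
    using bounded by auto
  then have "L = card (\<Union>b<K. ?level b)"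
    by simp
  also have "\<dots> = (\<Sum>b<K. card (?level b))"
    by (rule card_UN_disjoint) auto
  also have "\<dots> \<le> (\<Sum>b<K. card (?window b) + (r - 1))"
    by (intro sum_mono card_level_set_le_constant_windows[OF mono \<open>0 < r\<close>])
  also have "\<dots> = card (\<Union>b<K. ?window b) + K * (r - 1)"
    using finite_window by (simp add: sum.distrib card_UN_disjoint disjoint_iff)
  also have "(\<Union>b<K. ?window b) = {j. j + r \<le> L \<and> g j = g (j + r - 1)}"
  proof (intro equalityI subsetI)
    fix j assume j: "j \<in> {j. j + r \<le> L \<and> g j = g (j + r - 1)}"
    then have "j < L"
      using \<open>0 < r\<close> by simp
    then have "g j < K"
      by (rule bounded)
    moreover have "j \<in> ?window (g j)"
      using j by auto
    ultimately show "j \<in> (\<Union>b<K. ?window b)"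
      by blast
  qed auto
  finally show ?thesis .
qed

definition monochromatic :: "('a \<Rightarrow> 'b) \<Rightarrow> 'a set \<Rightarrow> bool" where
  "monochromatic c e \<longleftrightarrow> (\<exists>b. \<forall>x\<in>e. c x = b)"

lemma path_copy_many_monochromatic_edges:
  assumes P: "P \<in> path_copies n r s" and "0 < r"
    and c_mono: "mono_on {1..n} c" and c_range: "c ` {1..n} \<subseteq> {..<k}"
  shows "s \<le> card {e \<in> P. monochromatic c e} + k * (r - 1)"
proof -
  obtain f where f: "strict_mono_on {0..<s} f" "f ` {0..<s} \<subseteq> {1..n}"
    and P_eq: "P = path_edges r s f"
    using P by (auto simp: path_copies_eq)
  have cf_mono: "c (f i) \<le> c (f j)" if "i \<le> j" "j < s" for i j
    using that f by (intro mono_onD[OF c_mono] strict_mono_on_leD[OF f(1)]) (auto simp: image_subset_iff)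
  have cf_bounded: "c (f i) < k" if "i < s" for i
    using that f(2) c_range by (auto simp: image_subset_iff)
  define W where "W = {j. j + r \<le> s \<and> c (f j) = c (f (j + r - 1))}"
  have "s \<le> card W + k * (r - 1)"
    unfolding W_def
    by (rule constant_windows_lower_bound[where g = "\<lambda>j. c (f j)", OF cf_mono cf_bounded \<open>0 < r\<close>])
  have "(\<lambda>j. f ` {j..<j+r}) ` W \<subseteq> {e \<in> P. monochromatic c e}"
  proof (rule image_subsetI)
    fix j assume "j \<in> W"
    then have j: "j + r \<le> s" "c (f j) = c (f (j + r - 1))"
      by (auto simp: W_def)
    have "c (f i) = c (f j)" if "i \<in> {j..<j+r}" for i
      using that j cf_mono[of j i] cf_mono[of i "j + r - 1"] by auto
    then have "monochromatic c (f ` {j..<j+r})"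
      unfolding monochromatic_def by blast
    moreover have "f ` {j..<j+r} \<in> P"
      unfolding P_eq using j(1) by (rule path_edgesI)
    ultimately show "f ` {j..<j+r} \<in> {e \<in> P. monochromatic c e}"
      by blast
  qed
  moreover have "inj_on (\<lambda>j. f ` {j..<j+r}) W"
    by (rule inj_on_subset[OF inj_on_path_windows[OF f(1) \<open>0 < r\<close>]]) (auto simp: W_def)
  moreover have "finite {e \<in> P. monochromatic c e}"
    using finite_path_copy[OF P] by simp
  ultimately have "card W \<le> card {e \<in> P. monochromatic c e}"
    by (metis card_image card_mono)
  with \<open>s \<le> card W + k * (r - 1)\<close> show ?thesis
    by linarith
qed

lemma card_monochromatic_Kedges_le:
  assumes "0 < r" and c_range: "c ` {1..n} \<subseteq> {..<k}"
    and level_card: "\<And>b. card {x \<in> {1..n}. c x = b} \<le> M"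
  shows "card {e \<in> Kedges n r. monochromatic c e} \<le> k * (M choose r)"
proof -
  let ?level = "\<lambda>b. {x \<in> {1..n}. c x = b}"
  let ?edges_in = "\<lambda>b. {e. e \<subseteq> ?level b \<and> card e = r}"
  have finite_edges_in: "finite (?edges_in b)" for b
    by (rule finite_subset[of _ "Pow {1..n}"]) auto
  have "{e \<in> Kedges n r. monochromatic c e} \<subseteq> (\<Union>b<k. ?edges_in b)"
  proof
    fix e assume "e \<in> {e \<in> Kedges n r. monochromatic c e}"
    then obtain b where b: "\<forall>x\<in>e. c x = b" and e: "e \<subseteq> {1..n}" "card e = r"
      by (auto simp: Kedges_def monochromatic_def)
    then have "e \<noteq> {}"
      using \<open>0 < r\<close> by auto
    then obtain x where "x \<in> e"
      by blast
    with e(1) c_range have "c x < k"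
      by (auto simp: image_subset_iff)
    with b \<open>x \<in> e\<close> have "b < k"
      by auto
    moreover have "e \<in> ?edges_in b"
      using b e by auto
    ultimately show "e \<in> (\<Union>b<k. ?edges_in b)"
      by blast
  qed
  then have "card {e \<in> Kedges n r. monochromatic c e} \<le> card (\<Union>b<k. ?edges_in b)"
    using finite_edges_in by (intro card_mono) auto
  also have "\<dots> \<le> (\<Sum>b<k. card (?edges_in b))"
    by (rule card_UN_le) simp
  also have "\<dots> = (\<Sum>b<k. card (?level b) choose r)"
    by (simp add: n_subsets)
  also have "\<dots> \<le> (\<Sum>b<k. M choose r)"
    by (intro sum_mono binomial_right_mono level_card)
  finally show ?thesis
    by simp
qed

lemma sum_if_const_eq_card:
  fixes a :: "'a::comm_semiring_1"
  assumes "finite A"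
  shows "(\<Sum>x\<in>A. if P x then a else 0) = of_nat (card {x \<in> A. P x}) * a"
  using sum.inter_filter[OF assms, of "\<lambda>_. a" P] by simp

lemma fractional_transversal_monochromatic:
  assumes "0 < r" "0 < k" and c_mono: "mono_on {1..n} c" and c_range: "c ` {1..n} \<subseteq> {..<k}"
  shows "fractional_transversal n r (k * r) (\<lambda>e. if monochromatic c e then 1 / real k else 0)"
  unfolding fractional_transversal_def
proof (intro conjI ballI)
  fix P assume P: "P \<in> path_copies n r (k * r)"
  have "k * r \<le> card {e \<in> P. monochromatic c e} + k * (r - 1)"
    by (rule path_copy_many_monochromatic_edges[OF P \<open>0 < r\<close> c_mono c_range])
  then have "k \<le> card {e \<in> P. monochromatic c e}"
    using \<open>0 < r\<close> by (cases r) simp_all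
  then show "1 \<le> (\<Sum>e\<in>P. if monochromatic c e then 1 / real k else 0)"
    using \<open>0 < k\<close> by (simp add: sum_if_const_eq_card[OF finite_path_copy[OF P]])
qed simp

lemma card_interval_block_le:
  assumes "0 < M"
  shows "card {x \<in> {1..n}. (x - 1) div M = b} \<le> M"
proof -
  have "{x \<in> {1..n}. (x - 1) div M = b} \<subseteq> {b * M + 1..b * M + M}"
  proof
    fix x assume "x \<in> {x \<in> {1..n}. (x - 1) div M = b}"
    then have "1 \<le> x" "(x - 1) div M = b"
      by auto
    then have "b * M + (x - 1) mod M = x - 1"
      using div_mult_mod_eq[of "x - 1" M] by simp
    with \<open>1 \<le> x\<close> show "x \<in> {b * M + 1..b * M + M}"
      using mod_less_divisor[OF assms, of "x - 1"] by auto
  qed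
  then have "card {x \<in> {1..n}. (x - 1) div M = b} \<le> card {b * M + 1..b * M + M}"
    by (rule card_mono[rotated]) simp
  then show ?thesis
    by simp
qed

lemma tau_star_path_le_binomial:
  assumes "0 < r" "0 < k"
  shows "tau_star_path n r (k * r) \<le> real ((n div k + 1) choose r)"
proof -
  define M where "M = n div k + 1"
  define c where "c x = (x - 1) div M" for x
  have "0 < M"
    by (simp add: M_def)
  have c_mono: "mono_on {1..n} c"
    unfolding c_def by (intro mono_onI div_le_mono diff_le_mono)
  have "n < k * M"
    using dividend_less_div_times[OF assms(2), of n] by (simp add: M_def algebra_simps)
  then have c_range: "c ` {1..n} \<subseteq> {..<k}"
    by (auto simp: c_def div_less_iff_less_mult[OF \<open>0 < M\<close>])
  have level_card: "card {x \<in> {1..n}. c x = b} \<le> M" for b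
    unfolding c_def by (rule card_interval_block_le[OF \<open>0 < M\<close>])
  have "tau_star_path n r (k * r)
      \<le> (\<Sum>e\<in>Kedges n r. if monochromatic c e then 1 / real k else 0)"
    by (intro tau_star_path_le_sum fractional_transversal_monochromatic assms c_mono c_range)
  also have "\<dots> = real (card {e \<in> Kedges n r. monochromatic c e}) / real k"
    by (simp add: sum_if_const_eq_card[OF finite_Kedges])
  also have "\<dots> \<le> real (k * (M choose r)) / real k"
    using card_monochromatic_Kedges_le[OF assms(1) c_range level_card]
    by (intro divide_right_mono of_nat_mono) simp_all
  also have "\<dots> = real (M choose r)"
    using assms(2) by simp
  finally show ?thesis
    by (simp add: M_def)
qed

section \<open>Ratios of binomial coefficients\<close>

lemma binomial_ratio_eq_prod:
  assumes "r \<le> n"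
  shows "real (m choose r) / real (n choose r) = (\<Prod>i<r. (real m - real i) / (real n - real i))"
  by (simp add: binomial_gbinomial gbinomial_prod_rev atLeast0LessThan prod_dividef)

lemma tendsto_binomial_ratio:
  fixes a :: "nat \<Rightarrow> nat"
  assumes "(\<lambda>n. real (a n) / real n) \<longlonglongrightarrow> L"
  shows "(\<lambda>n. real (a n choose r) / real (n choose r)) \<longlonglongrightarrow> L ^ r"
proof -
  have "(\<lambda>n. \<Prod>i<r. (real (a n) / real n - real i / real n) / (1 - real i / real n))
      \<longlonglongrightarrow> (\<Prod>i<r. (L - 0) / (1 - 0))"
    by (intro tendsto_intros assms) auto
  moreover have "\<forall>\<^sub>F n in sequentially.
      (\<Prod>i<r. (real (a n) / real n - real i / real n) / (1 - real i / real n))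
      = real (a n choose r) / real (n choose r)"
    using eventually_gt_at_top[of r]
  proof eventually_elim
    case (elim n)
    have "(real (a n) / real n - real i / real n) / (1 - real i / real n)
        = (real (a n) - real i) / (real n - real i)" if "i < r" for i
      using elim that by (simp add: field_simps)
    then show ?case
      using binomial_ratio_eq_prod[of r n "a n"] elim by simp
  qed
  ultimately show ?thesis
    by (simp add: Lim_transform_eventually)
qed

lemma tendsto_div_plus_const_over_n:
  fixes k c :: nat
  assumes "0 < k"
  shows "(\<lambda>n. real (n div k + c) / real n) \<longlonglongrightarrow> 1 / real k"
proof -
  have eq: "real (n div k + c) / real n
      = 1 / real k - (real (n mod k) / real k) / real n + real c / real n"
    if "0 < n" for n
  proof -
    have "real (n div k) = real n / real k - real (n mod k) / real k"
      using of_nat_of_nat_div_aux[of n k, where 'a = real] by linarith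
    then have "real (n div k + c) / real n
        = (real n / real k - real (n mod k) / real k + real c) / real n"
      by simp
    also have "\<dots> = 1 / real k - (real (n mod k) / real k) / real n + real c / real n"
      using that assms by (simp add: field_simps)
    finally show ?thesis .
  qed
  have "(\<lambda>n. 1 / real k - (real (n mod k) / real k) / real n + real c / real n)
      \<longlonglongrightarrow> 1 / real k - 0 + 0"
  proof (intro tendsto_intros)
    show "(\<lambda>n. (real (n mod k) / real k) / real n) \<longlonglongrightarrow> 0"
    proof (rule tendsto_sandwich[where f = "\<lambda>_. 0" and h = "\<lambda>n. 1 / real n"])
      show "\<forall>\<^sub>F n in sequentially. (real (n mod k) / real k) / real n \<le> 1 / real n"
        using assms by (intro always_eventually allI divide_right_mono) (simp_all add: less_imp_le)
    qed (auto intro: lim_const_over_n)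
  qed
  moreover have "\<forall>\<^sub>F n in sequentially.
      1 / real k - (real (n mod k) / real k) / real n + real c / real n = real (n div k + c) / real n"
    using eventually_gt_at_top[of 0] by eventually_elim (rule eq[symmetric])
  ultimately show ?thesis
    by (simp add: Lim_transform_eventually)
qed

theorem theorem3p3:
  fixes r s :: nat
  assumes "0 < r" and "0 < s" and "r dvd s"
  shows "(\<lambda>n. real (nu_path n r s) / real (n choose r))
           \<longlonglongrightarrow> (real r / real s) ^ r \<and>
         (\<lambda>n. nu_star_path n r s / real (n choose r))
           \<longlonglongrightarrow> (real r / real s) ^ r \<and>
         (\<lambda>n. tau_star_path n r s / real (n choose r))
           \<longlonglongrightarrow> (real r / real s) ^ r"
proof -
  obtain k where s: "s = k * r"
    using assms(3) by (auto simp: dvd_def mult.commute)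
  with assms have "0 < k" "r \<le> s"
    by auto
  have ratio: "(real r / real s) ^ r = (1 / real k) ^ r"
    using s assms(1) by simp
  have lim: "(\<lambda>n. real ((n div k + c) choose r) / real (n choose r)) \<longlonglongrightarrow> (real r / real s) ^ r"
    for c
    unfolding ratio by (intro tendsto_binomial_ratio tendsto_div_plus_const_over_n \<open>0 < k\<close>)
  have sandwich: "(\<lambda>n. f n / real (n choose r)) \<longlonglongrightarrow> (real r / real s) ^ r"
    if "\<And>n. real ((n div k + 0) choose r) \<le> f n" "\<And>n. f n \<le> real ((n div k + 1) choose r)"
    for f
    by (rule tendsto_sandwich[OF _ _ lim lim]) (auto intro!: always_eventually divide_right_mono that)
  have bounds:
    "real ((n div k + 0) choose r) \<le> real (nu_path n r s)"
    "real (nu_path n r s) \<le> nu_star_path n r s"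
    "nu_star_path n r s \<le> tau_star_path n r s"
    "tau_star_path n r s \<le> real ((n div k + 1) choose r)" for n
    using binomial_le_nu_path[OF assms(1) \<open>0 < k\<close>, of "n div k" n]
      nu_path_le_nu_star_path[OF \<open>r \<le> s\<close>] nu_star_le_tau_star_path[OF \<open>r \<le> s\<close>]
      tau_star_path_le_binomial[OF assms(1) \<open>0 < k\<close>] s
    by simp_all
  show ?thesis
    by (intro conjI sandwich; meson order_trans bounds)
qed

end
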